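(* Let $n\ge 2$ and $g\ge 3$, and let $\mathcal M^{\mathrm o}_g(n)$ be the number of MAB pairs $(u,v)$ of binary words with $|u|=|v|=n$ and $\mathrm{lsb}(u,v)+\mathrm{lsb}(v,u)-n=g$. Then $$\mathcal M^{\mathrm o}_g(n)=2\sum_{i=g+1}^{n-1}\ \sum_{l_2=0}^{n-i-2}\ \sum_{l_1=l_2+2}^{n-i}\ \sum_{k=l_1}^{g+l_2}\ \sum_{m=k'}^{n-j+k}\frac{l_1-l_2}{n-i}\binom{n-i}{l_1}\binom{n-i}{l_2}\cdot{}_{A_{l_2}}N_{A_{l_1}}^{A_k}\cdot\frac{l_1-l_2}{n-j}\binom{n-j}{m-k}\binom{n-j}{m-k'},$$ where in each term $j=n+g-i$, $k'=k+l_1-l_2$, $A_{l_1}=(l_1,n-i-l_1)$, $A_{l_2}=(l_2,n-i-l_2)$ and $A_k=(k,j-k)$ (empty sums are $0$).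
   Context: Let $\Sigma=\{a,b\}$. For a word $w$ and a letter $c$, $|w|_c$ denotes the number of occurrences of $c$ in $w$. Two words $x,y$ are abelian equivalent, written $x\sim_{\mathrm{abl}}y$, if $|x|_c=|y|_c$ for all $c\in\Sigma$. For words $u,v$: a pair $(x,y)$ is an internal abelian-border of $(u,v)$ if $x$ is a nonempty proper suffix of $u$, $y$ is a proper prefix of $v$, and $x\sim_{\mathrm{abl}}y$; it is an external abelian-border of $(u,v)$ if $x$ is a nonempty proper prefix of $u$, $y$ is a proper suffix of $v$, and $x\sim_{\mathrm{abl}}y$. The pair $(u,v)$ is mutually abelian-bordered (MAB) if it has both an internal and an external abelian-border, and mutually abelian-unbordered (MAU) if it has neither. If $(u,v)$ has an internal abelian-border, $\mathrm{sb}(u,v)$ denotes its internal abelian-border $(x,y)$ of minimal length and $\mathrm{lsb}(u,v)=|x|$ is that minimal length. A lattice path is a finite sequence of points of $\mathbb Z^2$ in which each consecutive difference is $(1,0)$ (an east step) or $(0,1)$ (a north step). The word $w(p)\in\Sigma^*$ of a lattice path $p$ records its steps in order, writing $a$ for an east step and $b$ for a north step; conversely, for a point $A\in\mathbb Z^2$ and a word $w$, $p_A(w)$ is the lattice path starting at $A$ whose word is $w$. For lattice paths $p,q$, $p\cap q$ denotes the set of lattice points lying on both. For distinct lattice points $A,B,C$, ${}_{A}\mathcal N_{B}^{C}$ is the set of triples $(p,q,p')$ where $p$ is a lattice path from $A$ to $C$, $q$ is a lattice path from $B$ to $C$, $p'=p_B(w(p))$, $p\cap q=\{C\}$ and $q\cap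 p'=\{B\}$; and ${}_{A}N_{B}^{C}=|{}_{A}\mathcal N_{B}^{C}|$. Binomial coefficients $\binom{N}{r}$ are $0$ when $r<0$ or $r>N$. *)

theory Defs
  imports Complex_Main
begin

datatype letter = La | Lb

type_synonym word = "letter list"

definition abel_eq :: "word \<Rightarrow> word \<Rightarrow> bool" where
  "abel_eq x y \<longleftrightarrow> (\<forall>c. count_list x c = count_list y c)"

definition is_suffix_of :: "word \<Rightarrow> word \<Rightarrow> bool" where
  "is_suffix_of x u \<longleftrightarrow> (\<exists>z. u = z @ x)"

definition is_prefix_of :: "word \<Rightarrow> word \<Rightarrow> bool" where
  "is_prefix_of y v \<longleftrightarrow> (\<exists>z. v = y @ z)"

definition int_border :: "word \<Rightarrow> word \<Rightarrow> word \<Rightarrow> word \<Rightarrow> bool" where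
  "int_border u v x y \<longleftrightarrow>
     x \<noteq> [] \<and> is_suffix_of x u \<and> length x < length u \<and>
     is_prefix_of y v \<and> length y < length v \<and> abel_eq x y"

definition ext_border :: "word \<Rightarrow> word \<Rightarrow> word \<Rightarrow> word \<Rightarrow> bool" where
  "ext_border u v x y \<longleftrightarrow>
     x \<noteq> [] \<and> is_prefix_of x u \<and> length x < length u \<and>
     is_suffix_of y v \<and> length y < length v \<and> abel_eq x y"

definition MAB :: "word \<Rightarrow> word \<Rightarrow> bool" where
  "MAB u v \<longleftrightarrow> (\<exists>x y. int_border u v x y) \<and> (\<exists>x y. ext_border u v x y)"

text \<open>Length of the shortest internal abelian-border (meaningful when one exists).\<close>
definition lsb :: "word \<Rightarrow> word \<Rightarrow> nat" where
  "lsb u v = (LEAST l. \<exists>x y. int_border u v x y \<and> length x = l)"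

type_synonym point = "int \<times> int"

definition is_step :: "point \<Rightarrow> point \<Rightarrow> bool" where
  "is_step P Q \<longleftrightarrow> Q = (fst P + 1, snd P) \<or> Q = (fst P, snd P + 1)"

definition lattice_path :: "point list \<Rightarrow> bool" where
  "lattice_path p \<longleftrightarrow> p \<noteq> [] \<and> (\<forall>i. Suc i < length p \<longrightarrow> is_step (p ! i) (p ! Suc i))"

definition step_letter :: "point \<Rightarrow> point \<Rightarrow> letter" where
  "step_letter P Q = (if Q = (fst P + 1, snd P) then La else Lb)"

definition path_word :: "point list \<Rightarrow> word" where
  "path_word p = map (\<lambda>i. step_letter (p ! i) (p ! Suc i)) [0..<length p - 1]"

fun path_from :: "point \<Rightarrow> word \<Rightarrow> point list" where
  "path_from A [] = [A]"
| "path_from A (La # w) = A # path_from (fst A + 1, snd A) w"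
| "path_from A (Lb # w) = A # path_from (fst A, snd A + 1) w"

definition path_between :: "point list \<Rightarrow> point \<Rightarrow> point \<Rightarrow> bool" where
  "path_between p A C \<longleftrightarrow> lattice_path p \<and> hd p = A \<and> last p = C"

definition Nset :: "point \<Rightarrow> point \<Rightarrow> point \<Rightarrow> (point list \<times> point list \<times> point list) set" where
  "Nset A B C = {(p, q, p'). path_between p A C \<and> path_between q B C \<and>
       p' = path_from B (path_word p) \<and> set p \<inter> set q = {C} \<and> set q \<inter> set p' = {B}}"

definition Ncount :: "point \<Rightarrow> point \<Rightarrow> point \<Rightarrow> nat" where
  "Ncount A B C = card (Nset A B C)"

definition binom :: "int \<Rightarrow> int \<Rightarrow> real" where
  "binom N r = (if 0 \<le> r \<and> r \<le> N then real (nat N choose nat r) else 0)"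

definition Mo :: "nat \<Rightarrow> nat \<Rightarrow> nat" where
  "Mo g n = card {(u, v). length u = n \<and> length v = n \<and> MAB u v \<and>
       int (lsb u v) + int (lsb v u) - int n = int g}"

end

theory Submission
  imports Defs
begin

text \<open>Let \<open>(u, v)\<close> be MAB with \<open>lsb u v = i\<close> and \<open>lsb v u = j\<close>, \<open>i + j = n + g\<close>. Reading \<open>v\<close>
  backwards against \<open>u\<close> and counting the excess of \<open>a\<close>'s, the shortest border of \<open>(v, u)\<close> is the
  first return of this excess to \<open>0\<close>, at length \<open>j\<close>; symmetrically for \<open>(u, v)\<close> at length \<open>i\<close>.
  As \<open>i + j > n\<close>, the two border regions overlap in a middle block of length \<open>g\<close>, so
  \<open>u = y\<^sub>1 \<mu> y\<^sub>2\<^sup>R\<close> and \<open>v = x\<^sub>2 w\<^sup>R x\<^sub>1\<^sup>R\<close> with \<open>|x\<^sub>1| = |y\<^sub>1| = n - i\<close>, \<open>|x\<^sub>2| = |y\<^sub>2| = n - j\<close>.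
  The first-return conditions split into a strict ballot condition on each outer pair, counted by
  \<open>(l\<^sub>1 - l\<^sub>2)/N \<cdot> C(N, l\<^sub>1) C(N, l\<^sub>2)\<close>, and the condition that the lattice path of \<open>w\<close> runs
  strictly between that of \<open>\<mu>\<close> and its translate, which is what \<open>N\<close> counts. Exchanging the letters
  \<open>a\<close> and \<open>b\<close> swaps the pairs in which \<open>u\<close> starts with \<open>b\<close> with the others, giving the factor 2.\<close>

abbreviation acount :: "word \<Rightarrow> nat" where
  "acount w \<equiv> count_list w La"

lemma UNIV_letter: "(UNIV :: letter set) = {La, Lb}"
  using letter.exhaust by auto

instance letter :: finite
  by standard (simp add: UNIV_letter)

lemma finite_words_length: "finite {w :: word. length w = N}"
  using finite_lists_length_eq[of "UNIV :: letter set" N] by simp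

lemma length_eq_acount_add_bcount: "length w = acount w + count_list w Lb"
  by (induction w) (auto, metis letter.exhaust)

lemma abel_eq_length: "abel_eq x y \<Longrightarrow> length x = length y"
  unfolding abel_eq_def by (metis length_eq_acount_add_bcount)

lemma abel_eq_iff_acount: "length x = length y \<Longrightarrow> abel_eq x y \<longleftrightarrow> acount x = acount y"
  unfolding abel_eq_def by (metis length_eq_acount_add_bcount add_left_cancel letter.exhaust)

lemma acount_take_Suc: "acount (take t w) \<le> acount (take (Suc t) w) \<and> acount (take (Suc t) w) \<le> acount (take t w) + 1"
  by (cases "t < length w") (auto simp: take_Suc_conv_app_nth)

lemma acount_take_rev: "t \<le> length w \<Longrightarrow> acount (take t (rev w)) = acount w - acount (take (length w - t) w)"
  by (metis add_diff_cancel_left' append_take_drop_id count_list_append count_list_rev take_rev)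


section \<open>Prefix excess\<close>

definition prefix_excess :: "word \<Rightarrow> word \<Rightarrow> nat \<Rightarrow> int" where
  "prefix_excess x y t = int (acount (take t x)) - int (acount (take t y))"

lemma prefix_excess_0 [simp]: "prefix_excess x y 0 = 0"
  by (simp add: prefix_excess_def)

lemma prefix_excess_swap: "prefix_excess y x t = - prefix_excess x y t"
  by (simp add: prefix_excess_def)

lemma prefix_excess_full: "length x = length y \<Longrightarrow> prefix_excess x y (length x) = int (acount x) - int (acount y)"
  by (simp add: prefix_excess_def)

lemma prefix_excess_append:
  assumes "length x = length y"
  shows "prefix_excess (x @ x') (y @ y') l = (if l \<le> length x then prefix_excess x y l
    else prefix_excess x y (length x) + prefix_excess x' y' (l - length x))"
  using assms by (simp add: prefix_excess_def)

lemma prefix_excess_rev: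
  assumes "length x = length y" and "t \<le> length x"
  shows "prefix_excess (rev x) (rev y) t = prefix_excess x y (length x) - prefix_excess x y (length x - t)"
  using assms acount_take_rev[of t x] acount_take_rev[of t y]
    count_list_append[of "take (length x - t) x" "drop (length x - t) x" La]
    count_list_append[of "take (length y - t) y" "drop (length y - t) y" La]
  by (simp add: prefix_excess_def of_nat_diff)

lemma unit_steps_preserve_sign:
  fixes f :: "nat \<Rightarrow> int"
  assumes "a \<le> b"
    and "\<And>t. a \<le> t \<Longrightarrow> t < b \<Longrightarrow> \<bar>f (Suc t) - f t\<bar> \<le> 1"
    and "\<And>t. a \<le> t \<Longrightarrow> t \<le> b \<Longrightarrow> f t \<noteq> 0"
  shows "0 < f a \<longleftrightarrow> 0 < f b"
  using assms
proof (induction b rule: dec_induct)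
  case base
  then show ?case by simp
next
  case (step m)
  then have "0 < f a \<longleftrightarrow> 0 < f m" by simp
  moreover have "\<bar>f (Suc m) - f m\<bar> \<le> 1" "f m \<noteq> 0" "f (Suc m) \<noteq> 0" using step by simp_all
  ultimately show ?case by linarith
qed

lemma prefix_excess_sign:
  assumes "a \<le> b" and "\<And>t. a \<le> t \<Longrightarrow> t \<le> b \<Longrightarrow> prefix_excess x y t \<noteq> c"
  shows "c < prefix_excess x y a \<longleftrightarrow> c < prefix_excess x y b"
proof -
  have "\<bar>(prefix_excess x y (Suc t) - c) - (prefix_excess x y t - c)\<bar> \<le> 1" for t
    using acount_take_Suc[of t x] acount_take_Suc[of t y] unfolding prefix_excess_def by linarith
  then show ?thesis
    using unit_steps_preserve_sign[of a b "\<lambda>t. prefix_excess x y t - c"] assms by auto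
qed

lemma prefix_excess_pos_on:
  assumes "\<forall>l\<in>{a..<b}. prefix_excess x y l \<noteq> 0" and "m \<in> {a..<b}" and "0 < prefix_excess x y m"
  shows "\<forall>l\<in>{a..<b}. 0 < prefix_excess x y l"
proof
  fix l assume l: "l \<in> {a..<b}"
  show "0 < prefix_excess x y l"
  proof (cases "m \<le> l")
    case True
    then show ?thesis using prefix_excess_sign[of m l x y 0] assms l by auto
  next
    case False
    then show ?thesis using prefix_excess_sign[of l m x y 0] assms l by auto
  qed
qed

lemma prefix_excess_avoids_ends_iff:
  assumes "0 < d" and "prefix_excess x y g = - d"
  shows "(\<forall>t\<le>g. prefix_excess x y t = - d \<longleftrightarrow> t = g) \<and> (\<forall>t\<le>g. prefix_excess x y t = 0 \<longleftrightarrow> t = 0) \<longleftrightarrow>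
    (\<forall>t\<in>{1..<g}. - d < prefix_excess x y t \<and> prefix_excess x y t < 0)"
proof
  assume ends: "(\<forall>t\<le>g. prefix_excess x y t = - d \<longleftrightarrow> t = g) \<and> (\<forall>t\<le>g. prefix_excess x y t = 0 \<longleftrightarrow> t = 0)"
  show "\<forall>t\<in>{1..<g}. - d < prefix_excess x y t \<and> prefix_excess x y t < 0"
  proof
    fix t assume t: "t \<in> {1..<g}"
    have "- d < prefix_excess x y 0 \<longleftrightarrow> - d < prefix_excess x y t"
      by (rule prefix_excess_sign) (use ends t in auto)
    moreover have "0 < prefix_excess y x t \<longleftrightarrow> 0 < prefix_excess y x g"
      by (rule prefix_excess_sign) (use ends t in \<open>auto simp: prefix_excess_swap[of y x]\<close>)
    ultimately show "- d < prefix_excess x y t \<and> prefix_excess x y t < 0"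
      using assms by (simp add: prefix_excess_swap[of y x])
  qed
next
  assume between: "\<forall>t\<in>{1..<g}. - d < prefix_excess x y t \<and> prefix_excess x y t < 0"
  have "(prefix_excess x y t = - d \<longleftrightarrow> t = g) \<and> (prefix_excess x y t = 0 \<longleftrightarrow> t = 0)" if "t \<le> g" for t
  proof (cases "t = 0 \<or> t = g")
    case True
    then show ?thesis using assms by auto
  next
    case False
    then show ?thesis using between[rule_format, of t] that by auto
  qed
  then show "(\<forall>t\<le>g. prefix_excess x y t = - d \<longleftrightarrow> t = g) \<and> (\<forall>t\<le>g. prefix_excess x y t = 0 \<longleftrightarrow> t = 0)"
    by blast
qed

lemma prefix_excess_append_first_zero_iff:
  assumes "length x = N" and "length y = N" and "1 \<le> g"
  shows "(\<forall>l\<in>{1..<N + g}. 0 < prefix_excess (x @ x') (y @ y') l) \<and> prefix_excess (x @ x') (y @ y') (N + g) = 0 \<longleftrightarrow>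
    (\<forall>l\<in>{1..N}. 0 < prefix_excess x y l) \<and> (\<forall>t\<in>{1..<g}. - prefix_excess x y N < prefix_excess x' y' t) \<and>
    prefix_excess x' y' g = - prefix_excess x y N"
proof -
  have split: "(\<forall>l\<in>{1..<N + g}. P l) \<longleftrightarrow> (\<forall>l\<in>{1..N}. P l) \<and> (\<forall>t\<in>{1..<g}. P (N + t))" for P
  proof
    assume "\<forall>l\<in>{1..<N + g}. P l"
    then show "(\<forall>l\<in>{1..N}. P l) \<and> (\<forall>t\<in>{1..<g}. P (N + t))" using assms(3) by auto
  next
    assume "(\<forall>l\<in>{1..N}. P l) \<and> (\<forall>t\<in>{1..<g}. P (N + t))"
    then have low: "\<forall>l\<in>{1..N}. P l" and high: "\<forall>t\<in>{1..<g}. P (N + t)" by blast+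
    show "\<forall>l\<in>{1..<N + g}. P l"
    proof
      fix l assume l: "l \<in> {1..<N + g}"
      show "P l"
      proof (cases "l \<le> N")
        case False
        then have "l - N \<in> {1..<g}" using l by auto
        then have "P (N + (l - N))" using high by blast
        then show ?thesis using False by simp
      qed (use low l in auto)
    qed
  qed
  show ?thesis
    unfolding split using assms by (auto simp: prefix_excess_append)
qed

lemma prefix_excess_rev_first_zero_iff:
  assumes "length x = g" and "length y = g"
  shows "(\<forall>t\<in>{1..<g}. c < prefix_excess (rev x) (rev y) t) \<and> prefix_excess (rev x) (rev y) g = c \<longleftrightarrow>
    (\<forall>t\<in>{1..<g}. prefix_excess x y t < 0) \<and> prefix_excess x y g = c"
proof -
  have rev: "prefix_excess (rev x) (rev y) t = prefix_excess x y g - prefix_excess x y (g - t)" if "t \<le> g" for t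
    using prefix_excess_rev[of x y t] assms that by simp
  have reflect: "(\<forall>t\<in>{1..<g}. P (g - t)) \<longleftrightarrow> (\<forall>t\<in>{1..<g}. P t)" for P
  proof
    assume reflected: "\<forall>t\<in>{1..<g}. P (g - t)"
    show "\<forall>t\<in>{1..<g}. P t"
    proof
      fix t assume t: "t \<in> {1..<g}"
      then have "P (g - (g - t))" using reflected[rule_format, of "g - t"] by auto
      then show "P t" using t by simp
    qed
  qed auto
  show ?thesis
    using rev reflect[of "\<lambda>t. prefix_excess x y t < 0"] by auto
qed

section \<open>Ballot pairs\<close>

definition ballot_pairs :: "nat \<Rightarrow> int \<Rightarrow> int \<Rightarrow> (word \<times> word) set" where
  "ballot_pairs N c1 c2 = {(x, y). length x = N \<and> length y = N \<and> int (acount x) = c1 \<and> int (acount y) = c2 \<and>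
     (\<forall>l\<in>{1..N}. acount (take l y) < acount (take l x))}"

lemma finite_ballot_pairs: "finite (ballot_pairs N c1 c2)"
  by (rule finite_subset[of _ "{x. length x = N} \<times> {y. length y = N}"])
     (auto simp: ballot_pairs_def finite_words_length)

lemma ballot_pairs_0: "ballot_pairs 0 c1 c2 = (if c1 = 0 \<and> c2 = 0 then {([], [])} else {})"
  by (auto simp: ballot_pairs_def)

lemma ballot_pairs_empty: "1 \<le> N \<Longrightarrow> c1 \<le> c2 \<Longrightarrow> ballot_pairs N c1 c2 = {}"
  by (force simp: ballot_pairs_def)

lemma ballot_pairs_Suc:
  assumes "c2 < c1"
  shows "ballot_pairs (Suc N) c1 c2 = (\<Union>(a, b)\<in>UNIV.
    (\<lambda>(x, y). (x @ [a], y @ [b])) ` ballot_pairs N (c1 - of_bool (a = La)) (c2 - of_bool (b = La)))"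
proof (intro set_eqI iffI)
  fix z assume z: "z \<in> ballot_pairs (Suc N) c1 c2"
  then obtain x a y b where xy: "z = (x @ [a], y @ [b])" and len: "length x = N" "length y = N"
    unfolding ballot_pairs_def by (auto simp: length_Suc_conv_rev)
  have "acount (take l y) < acount (take l x)" if "l \<in> {1..N}" for l
  proof -
    have "acount (take l (y @ [b])) < acount (take l (x @ [a]))"
      using z that unfolding xy ballot_pairs_def by (auto simp del: take_append)
    then show ?thesis using that len by simp
  qed
  then have "(x, y) \<in> ballot_pairs N (c1 - of_bool (a = La)) (c2 - of_bool (b = La))"
    using z len unfolding xy ballot_pairs_def by auto
  then show "z \<in> (\<Union>(a, b)\<in>UNIV.
    (\<lambda>(x, y). (x @ [a], y @ [b])) ` ballot_pairs N (c1 - of_bool (a = La)) (c2 - of_bool (b = La)))"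
    unfolding xy by (intro UN_I[of "(a, b)"]) auto
next
  fix z assume "z \<in> (\<Union>(a, b)\<in>UNIV.
    (\<lambda>(x, y). (x @ [a], y @ [b])) ` ballot_pairs N (c1 - of_bool (a = La)) (c2 - of_bool (b = La)))"
  then obtain a b x y where xy: "z = (x @ [a], y @ [b])"
    and xy_in: "(x, y) \<in> ballot_pairs N (c1 - of_bool (a = La)) (c2 - of_bool (b = La))" by auto
  then have len: "length x = N" "length y = N" by (auto simp: ballot_pairs_def)
  have "acount (take l (y @ [b])) < acount (take l (x @ [a]))" if "l \<in> {1..Suc N}" for l
  proof (cases "l = Suc N")
    case True
    then show ?thesis using xy_in len assms by (auto simp: ballot_pairs_def)
  next
    case False
    then show ?thesis using xy_in len that by (auto simp: ballot_pairs_def)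
  qed
  then show "z \<in> ballot_pairs (Suc N) c1 c2"
    using xy_in len unfolding xy ballot_pairs_def by auto
qed

lemma card_ballot_pairs_Suc:
  assumes "c2 < c1"
  shows "card (ballot_pairs (Suc N) c1 c2) = card (ballot_pairs N (c1 - 1) (c2 - 1)) + card (ballot_pairs N (c1 - 1) c2)
     + card (ballot_pairs N c1 (c2 - 1)) + card (ballot_pairs N c1 c2)"
proof -
  let ?F = "\<lambda>(a, b). (\<lambda>(x, y). (x @ [a], y @ [b])) ` ballot_pairs N (c1 - of_bool (a = La)) (c2 - of_bool (b = La))"
  have "card (ballot_pairs (Suc N) c1 c2) = (\<Sum>ab\<in>UNIV. card (?F ab))"
    unfolding ballot_pairs_Suc[OF assms]
    by (rule card_UN_disjoint) (auto simp: finite_ballot_pairs)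
  also have "\<dots> = (\<Sum>(a, b)\<in>UNIV. card (ballot_pairs N (c1 - of_bool (a = La)) (c2 - of_bool (b = La))))"
    by (rule sum.cong) (auto intro!: card_image inj_onI)
  also have "(UNIV :: (letter \<times> letter) set) = {(La, La), (La, Lb), (Lb, La), (Lb, Lb)}"
    using letter.exhaust by auto
  finally show ?thesis by simp
qed

lemma binom_Suc:
  assumes "0 \<le> N"
  shows "binom (N + 1) r = binom N r + binom N (r - 1)"
proof (cases "r \<le> 0")
  case True
  then show ?thesis using assms by (auto simp: binom_def)
next
  case False
  then obtain r' where r: "r = int r' + 1" by (metis add.commute not_le zero_less_imp_eq_int Suc_pred of_nat_Suc)
  obtain N' where N: "N = int N'" using assms nonneg_int_cases by blast
  have "nat (N + 1) = Suc N'" "nat r = Suc r'" using r N by simp_all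
  then show ?thesis using r N by (auto simp: binom_def)
qed

lemma binom_absorption:
  assumes "0 \<le> N"
  shows "real_of_int r * binom (N + 1) r = real_of_int (N + 1) * binom N (r - 1)"
proof (cases "r \<le> 0")
  case True
  then show ?thesis using assms by (auto simp: binom_def)
next
  case False
  then obtain r' where r: "r = int r' + 1" by (metis add.commute not_le zero_less_imp_eq_int Suc_pred of_nat_Suc)
  obtain N' where N: "N = int N'" using assms nonneg_int_cases by blast
  have "nat (N + 1) = Suc N'" "nat r = Suc r'" using r N by simp_all
  moreover have "real (Suc r') * real (Suc N' choose Suc r') = real (Suc N') * real (N' choose r')"
    by (metis Suc_times_binomial of_nat_mult)
  ultimately show ?thesis using r N by (auto simp: binom_def algebra_simps)
qed

lemma card_ballot_pairs:
  assumes "1 \<le> N" and "c2 \<le> c1"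
  shows "real N * card (ballot_pairs N c1 c2) = real_of_int (c1 - c2) * binom (int N) c1 * binom (int N) c2"
  using assms
proof (induction N arbitrary: c1 c2 rule: nat_induct_at_least)
  case base
  consider "c1 = c2" | "c1 = 1" "c2 = 0" | "c2 < c1" "c1 < 0 \<or> 1 < c1 \<or> c2 < 0"
    using base by fastforce
  then show ?case
    using card_ballot_pairs_Suc[of c2 c1 0] ballot_pairs_empty[of 1 c1 c2]
    by cases (auto simp: ballot_pairs_0 binom_def)
next
  case (Suc N)
  show ?case
  proof (cases "c1 = c2")
    case True
    then show ?thesis using ballot_pairs_empty[of "Suc N" c1 c2] by simp
  next
    case False
    then have lt: "c2 < c1" using Suc.prems by simp
    define a where "a = binom (int N) c1"
    define a' where "a' = binom (int N) (c1 - 1)"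
    define b where "b = binom (int N) c2"
    define b' where "b' = binom (int N) (c2 - 1)"
    have pascal: "binom (int (Suc N)) c1 = a + a'" "binom (int (Suc N)) c2 = b + b'"
      using binom_Suc[of "int N" c1] binom_Suc[of "int N" c2] by (simp_all add: a_def a'_def b_def b'_def add.commute)
    have absorb: "real_of_int c1 * (a + a') = real (Suc N) * a'" "real_of_int c2 * (b + b') = real (Suc N) * b'"
      using binom_absorption[of "int N" c1] binom_absorption[of "int N" c2] pascal
      by (simp_all add: a'_def b'_def algebra_simps)
    have IH: "real N * card (ballot_pairs N (c1 - 1) (c2 - 1)) = real_of_int (c1 - c2) * a' * b'"
      "real N * card (ballot_pairs N (c1 - 1) c2) = (real_of_int c1 - 1 - real_of_int c2) * a' * b"
      "real N * card (ballot_pairs N c1 (c2 - 1)) = (real_of_int c1 - real_of_int c2 + 1) * a * b'"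
      "real N * card (ballot_pairs N c1 c2) = real_of_int (c1 - c2) * a * b"
      using Suc.IH[of "c2 - 1" "c1 - 1"] Suc.IH[of c2 "c1 - 1"] Suc.IH[of "c2 - 1" c1] Suc.IH[of c2 c1] lt
      by (simp_all add: a_def a'_def b_def b'_def)
    have "real N * (real (Suc N) * card (ballot_pairs (Suc N) c1 c2))
        = real (Suc N) * (real N * card (ballot_pairs N (c1 - 1) (c2 - 1)) + real N * card (ballot_pairs N (c1 - 1) c2)
          + real N * card (ballot_pairs N c1 (c2 - 1)) + real N * card (ballot_pairs N c1 c2))"
      unfolding card_ballot_pairs_Suc[OF lt] by (simp add: algebra_simps)
    also have "\<dots> = real (Suc N) * ((real_of_int c1 - real_of_int c2) * a' * b' + (real_of_int c1 - 1 - real_of_int c2) * a' * b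
          + (real_of_int c1 - real_of_int c2 + 1) * a * b' + (real_of_int c1 - real_of_int c2) * a * b)"
      unfolding IH by simp
    also have "\<dots> = real N * (real_of_int (c1 - c2) * binom (int (Suc N)) c1 * binom (int (Suc N)) c2)"
      unfolding pascal using absorb by simp algebra
    finally show ?thesis using Suc.hyps by simp
  qed
qed

lemma ballot_pairs_iff:
  "(x, y) \<in> ballot_pairs N c1 c2 \<longleftrightarrow> length x = N \<and> length y = N \<and> int (acount x) = c1 \<and> int (acount y) = c2 \<and>
     (\<forall>l\<in>{1..N}. 0 < prefix_excess x y l)"
  by (auto simp: ballot_pairs_def prefix_excess_def)

section \<open>Lattice paths\<close>

definition path_point :: "point \<Rightarrow> word \<Rightarrow> nat \<Rightarrow> point" where
  "path_point A w t = (fst A + int (acount (take t w)), snd A + int t - int (acount (take t w)))"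

lemma path_point_0 [simp]: "path_point A w 0 = A"
  by (simp add: path_point_def)

lemma path_point_level: "fst (path_point A w t) + snd (path_point A w t) = fst A + snd A + int t"
  by (simp add: path_point_def)

lemma path_point_eq_iff:
  assumes "fst A + snd A = fst B + snd B"
  shows "path_point A w t = path_point B w' s \<longleftrightarrow>
    t = s \<and> fst A + int (acount (take t w)) = fst B + int (acount (take s w'))"
proof
  assume eq: "path_point A w t = path_point B w' s"
  then have "t = s" using path_point_level[of A w t] path_point_level[of B w' s] assms by simp
  then show "t = s \<and> fst A + int (acount (take t w)) = fst B + int (acount (take s w'))"
    using eq by (simp add: path_point_def)
next
  assume "t = s \<and> fst A + int (acount (take t w)) = fst B + int (acount (take s w'))"
  then have "t = s" and "fst A + int (acount (take s w)) = fst B + int (acount (take s w'))" by auto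
  then show "path_point A w t = path_point B w' s" using assms unfolding path_point_def prod_eq_iff by simp
qed

lemma inj_path_point: "inj (path_point A w)"
  by (rule injI) (metis path_point_level add_left_cancel of_nat_eq_iff)

lemma length_path_from: "length (path_from A w) = Suc (length w)"
  by (induction A w rule: path_from.induct) auto

lemma path_from_not_Nil: "path_from A w \<noteq> []"
  using length_path_from[of A w] by auto

lemma hd_path_from: "hd (path_from A w) = A"
  by (induction A w rule: path_from.induct) auto

lemma nth_path_from: "t \<le> length w \<Longrightarrow> path_from A w ! t = path_point A w t"
proof (induction A w arbitrary: t rule: path_from.induct)
  case (1 A)
  then show ?case by simp
next
  case (2 A w)
  then show ?case by (cases t) (auto simp: path_point_def)
next
  case (3 A w)
  then show ?case by (cases t) (auto simp: path_point_def)
qed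

lemma last_path_from: "last (path_from A w) = path_point A w (length w)"
  using path_from_not_Nil[of A w]
  by (simp add: last_conv_nth length_path_from nth_path_from del: path_from.simps)

lemma set_path_from: "set (path_from A w) = path_point A w ` {..length w}"
proof -
  have "set (path_from A w) = (!) (path_from A w) ` {..length w}"
    using nth_image[of "length (path_from A w)" "path_from A w"]
    by (simp add: length_path_from atLeast0LessThan lessThan_Suc_atMost del: path_from.simps)
  also have "\<dots> = path_point A w ` {..length w}"
    by (rule image_cong) (simp_all add: nth_path_from del: path_from.simps)
  finally show ?thesis .
qed

lemma path_word_Cons_Cons: "path_word (P # Q # r) = step_letter P Q # path_word (Q # r)"
proof -
  have "[0..<length (P # Q # r) - 1] = 0 # map Suc [0..<length (Q # r) - 1]"
    by (simp add: upt_conv_Cons map_Suc_upt del: upt_Suc)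
  then show ?thesis unfolding path_word_def by simp
qed

lemma path_from_eq_Cons: "\<exists>r. path_from A w = A # r"
  by (cases "(A, w)" rule: path_from.cases) auto

lemma path_word_path_from: "path_word (path_from A w) = w"
proof (induction A w rule: path_from.induct)
  case (1 A)
  then show ?case by (simp add: path_word_def)
next
  case (2 A w)
  obtain r where "path_from (fst A + 1, snd A) w = (fst A + 1, snd A) # r"
    using path_from_eq_Cons by blast
  then show ?case using 2 by (simp add: path_word_Cons_Cons step_letter_def)
next
  case (3 A w)
  obtain r where "path_from (fst A, snd A + 1) w = (fst A, snd A + 1) # r"
    using path_from_eq_Cons by blast
  then show ?case using 3 by (simp add: path_word_Cons_Cons step_letter_def)
qed

lemma lattice_path_Cons_Cons: "lattice_path (P # Q # r) \<longleftrightarrow> is_step P Q \<and> lattice_path (Q # r)"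
  unfolding lattice_path_def by (auto simp: All_less_Suc2)

lemma lattice_path_path_from: "lattice_path (path_from A w)"
proof (induction A w rule: path_from.induct)
  case (1 A)
  then show ?case by (simp add: lattice_path_def)
next
  case (2 A w)
  obtain r where "path_from (fst A + 1, snd A) w = (fst A + 1, snd A) # r"
    using path_from_eq_Cons by blast
  then show ?case using 2 by (simp add: lattice_path_Cons_Cons is_step_def)
next
  case (3 A w)
  obtain r where "path_from (fst A, snd A + 1) w = (fst A, snd A + 1) # r"
    using path_from_eq_Cons by blast
  then show ?case using 3 by (simp add: lattice_path_Cons_Cons is_step_def)
qed

lemma path_from_path_word: "lattice_path p \<Longrightarrow> path_from (hd p) (path_word p) = p"
proof (induction p rule: induct_list012)
  case 1
  then show ?case by (simp add: lattice_path_def)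
next
  case (2 x)
  then show ?case by (simp add: path_word_def)
next
  case (3 P Q r)
  then have "is_step P Q" and "path_from Q (path_word (Q # r)) = Q # r"
    by (auto simp: lattice_path_Cons_Cons)
  then show ?case by (auto simp: path_word_Cons_Cons step_letter_def is_step_def)
qed

lemma path_between_eq_path_from:
  assumes "path_between p A C"
  shows "p = path_from A (path_word p)" and "path_point A (path_word p) (length (path_word p)) = C"
  using assms path_from_path_word last_path_from unfolding path_between_def by metis+

lemma path_from_Int_eq_singleton_iff:
  assumes "fst A + snd A = fst B + snd B" and "length w' = length w" and "s \<le> length w"
  shows "set (path_from A w) \<inter> set (path_from B w') = {path_point A w s} \<longleftrightarrow>
    (\<forall>t\<le>length w. prefix_excess w' w t = fst A - fst B \<longleftrightarrow> t = s)"
proof -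
  let ?S = "{t. t \<le> length w \<and> fst A + int (acount (take t w)) = fst B + int (acount (take t w'))}"
  have "set (path_from A w) \<inter> set (path_from B w') = path_point A w ` ?S"
    using assms(1,2) by (auto simp: set_path_from path_point_eq_iff)
  then have "set (path_from A w) \<inter> set (path_from B w') = {path_point A w s} \<longleftrightarrow> ?S = {s}"
    using inj_image_eq_iff[OF inj_path_point, of A w _ "{s}"] by simp
  moreover have "?S = {t. t \<le> length w \<and> prefix_excess w' w t = fst A - fst B}"
    by (auto simp: prefix_excess_def)
  ultimately show ?thesis using assms(3) by auto
qed

section \<open>Non-crossing path triples\<close>

text \<open>The words \<open>\<mu>\<close> of \<open>p\<close> and \<open>w\<close> of \<open>q\<close> for the triples in
  \<open>Nset (l\<^sub>2, N - l\<^sub>2) (l\<^sub>1, N - l\<^sub>1) (k, N + g - k)\<close>: \<open>q\<close> runs strictly between \<open>p\<close> and its translate \<open>p'\<close>.\<close>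

definition Nwords :: "nat \<Rightarrow> int \<Rightarrow> int \<Rightarrow> int \<Rightarrow> (word \<times> word) set" where
  "Nwords g l1 l2 k = {(mu, w). length mu = g \<and> length w = g \<and> l2 + int (acount mu) = k \<and> l1 + int (acount w) = k \<and>
     (\<forall>t\<in>{1..<g}. l2 + int (acount (take t mu)) < l1 + int (acount (take t w)) \<and>
        acount (take t w) < acount (take t mu))}"

lemma finite_Nwords: "finite (Nwords g l1 l2 k)"
  by (rule finite_subset[of _ "{x. length x = g} \<times> {y. length y = g}"])
     (auto simp: Nwords_def finite_words_length)

lemma Nwords_iff:
  "(mu, w) \<in> Nwords g l1 l2 k \<longleftrightarrow> length mu = g \<and> length w = g \<and> l2 + int (acount mu) = k \<and>
     prefix_excess w mu g = l2 - l1 \<and> (\<forall>t\<in>{1..<g}. l2 - l1 < prefix_excess w mu t \<and> prefix_excess w mu t < 0)"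
  by (auto simp: Nwords_def prefix_excess_def)

lemma path_from_in_Nset_iff:
  fixes l1 l2 k N :: int and g :: nat
  assumes "l2 < l1"
  defines "A \<equiv> (l2, N - l2)" and "B \<equiv> (l1, N - l1)" and "C \<equiv> (k, N + int g - k)"
  shows "(path_from A mu, path_from B w, path_from B mu) \<in> Nset A B C \<longleftrightarrow> (mu, w) \<in> Nwords g l1 l2 k"
proof -
  have level: "fst A + snd A = fst B + snd B"
    by (simp add: A_def B_def)
  have ends: "path_between (path_from A mu) A C \<and> path_between (path_from B w) B C \<longleftrightarrow>
      length mu = g \<and> length w = g \<and> l2 + int (acount mu) = k \<and> prefix_excess w mu g = l2 - l1"
    by (auto simp: path_between_def lattice_path_path_from hd_path_from last_path_from path_point_def
        prefix_excess_def A_def B_def C_def)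
  have meets: "set (path_from A mu) \<inter> set (path_from B w) = {C} \<and> set (path_from B w) \<inter> set (path_from B mu) = {B}
      \<longleftrightarrow> (\<forall>t\<le>g. prefix_excess w mu t = l2 - l1 \<longleftrightarrow> t = g) \<and> (\<forall>t\<le>g. prefix_excess w mu t = 0 \<longleftrightarrow> t = 0)"
    if "length mu = g" "length w = g" "l2 + int (acount mu) = k"
  proof -
    have "C = path_point A mu g" "B = path_point B w 0"
      using that by (simp_all add: A_def C_def path_point_def)
    then show ?thesis
      using path_from_Int_eq_singleton_iff[OF level, of w mu g]
        path_from_Int_eq_singleton_iff[OF refl, of mu w 0] that
      by (simp add: A_def B_def prefix_excess_swap[of mu w])
  qed
  show ?thesis
    using ends meets prefix_excess_avoids_ends_iff[of "l1 - l2" w mu g] assms(1)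
    unfolding Nset_def Nwords_iff by (auto simp: path_word_path_from)
qed

lemma Nset_eq_image_Nwords:
  fixes l1 l2 k N :: int and g :: nat
  assumes "l2 < l1"
  defines "A \<equiv> (l2, N - l2)" and "B \<equiv> (l1, N - l1)" and "C \<equiv> (k, N + int g - k)"
  shows "Nset A B C = (\<lambda>(mu, w). (path_from A mu, path_from B w, path_from B mu)) ` Nwords g l1 l2 k"
proof (intro set_eqI iffI)
  fix z assume z: "z \<in> Nset A B C"
  then obtain p q where "z = (p, q, path_from B (path_word p))"
    "path_between p A C" "path_between q B C" unfolding Nset_def by auto
  then have "z = (path_from A (path_word p), path_from B (path_word q), path_from B (path_word p))"
    using path_between_eq_path_from(1) by metis
  with z show "z \<in> (\<lambda>(mu, w). (path_from A mu, path_from B w, path_from B mu)) ` Nwords g l1 l2 k"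
    using path_from_in_Nset_iff[OF assms(1)] unfolding A_def B_def C_def by auto
qed (use path_from_in_Nset_iff[OF assms(1)] in \<open>auto simp: A_def B_def C_def\<close>)

lemma Ncount_eq_card_Nwords:
  fixes l1 l2 k N :: int and g :: nat
  assumes "l2 < l1"
  shows "Ncount (l2, N - l2) (l1, N - l1) (k, N + int g - k) = card (Nwords g l1 l2 k)"
  unfolding Ncount_def Nset_eq_image_Nwords[OF assms]
  by (rule card_image) (auto intro!: inj_onI dest: arg_cong[where f = path_word] simp: path_word_path_from)

section \<open>Shortest abelian borders\<close>

text \<open>Reversing \<open>u\<close> turns its suffixes into prefixes, so the internal abelian-border lengths of
  \<open>(u, v)\<close> are the positive zeros of \<open>prefix_excess (rev u) v\<close>.\<close>

definition is_lsb :: "word \<Rightarrow> word \<Rightarrow> nat \<Rightarrow> bool" where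
  "is_lsb u v i \<longleftrightarrow> 1 \<le> i \<and> i < length u \<and> i < length v \<and> prefix_excess (rev u) v i = 0 \<and>
     (\<forall>l\<in>{1..<i}. prefix_excess (rev u) v l \<noteq> 0)"

lemma int_border_length_iff:
  "(\<exists>x y. int_border u v x y \<and> length x = l) \<longleftrightarrow>
     1 \<le> l \<and> l < length u \<and> l < length v \<and> prefix_excess (rev u) v l = 0"
proof
  assume "\<exists>x y. int_border u v x y \<and> length x = l"
  then obtain x y z z' where u: "u = z @ x" and v: "v = y @ z'" and x: "x \<noteq> []" "length x = l"
    and lens: "length x < length u" "length y < length v" and xy: "abel_eq x y"
    unfolding int_border_def is_suffix_of_def is_prefix_of_def by blast
  have "length y = l" using abel_eq_length[OF xy] x by simp
  moreover have "take l (rev u) = rev x" "take l v = y" using u v x \<open>length y = l\<close> by simp_all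
  moreover have "acount x = acount y" using xy abel_eq_iff_acount abel_eq_length by blast
  ultimately show "1 \<le> l \<and> l < length u \<and> l < length v \<and> prefix_excess (rev u) v l = 0"
    using x lens by (auto simp: prefix_excess_def Suc_le_eq)
next
  assume l: "1 \<le> l \<and> l < length u \<and> l < length v \<and> prefix_excess (rev u) v l = 0"
  let ?x = "drop (length u - l) u" and ?y = "take l v"
  have "rev ?x = take l (rev u)" using l by (simp add: rev_drop)
  then have "acount ?x = acount ?y"
    using l count_list_rev[of ?x La] unfolding prefix_excess_def by simp
  then have "int_border u v ?x ?y"
    using l unfolding int_border_def is_suffix_of_def is_prefix_of_def
    by (auto simp: abel_eq_iff_acount) (metis append_take_drop_id)+
  moreover have "length ?x = l" using l by simp
  ultimately show "\<exists>x y. int_border u v x y \<and> length x = l" by blast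
qed

lemma is_lsb_iff: "(\<exists>x y. int_border u v x y) \<and> lsb u v = i \<longleftrightarrow> is_lsb u v i"
proof -
  let ?P = "\<lambda>l. \<exists>x y. int_border u v x y \<and> length x = l"
  have "(\<exists>x y. int_border u v x y) \<and> lsb u v = i \<longleftrightarrow> (\<exists>l. ?P l) \<and> (LEAST l. ?P l) = i"
    unfolding lsb_def by blast
  also have "\<dots> \<longleftrightarrow> ?P i \<and> (\<forall>l<i. \<not> ?P l)"
  proof
    assume h: "(\<exists>l. ?P l) \<and> (LEAST l. ?P l) = i"
    then have "?P i" using LeastI_ex[of ?P] by simp
    moreover have "\<not> ?P l" if "l < i" for l using not_less_Least[of l ?P] that h by simp
    ultimately show "?P i \<and> (\<forall>l<i. \<not> ?P l)" by blast
  next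
    assume h: "?P i \<and> (\<forall>l<i. \<not> ?P l)"
    then have "(LEAST l. ?P l) = i" by (intro Least_equality) (auto simp: not_less[symmetric])
    then show "(\<exists>l. ?P l) \<and> (LEAST l. ?P l) = i" using h by blast
  qed
  also have "\<dots> \<longleftrightarrow> is_lsb u v i"
    unfolding int_border_length_iff is_lsb_def by (auto dest: order.strict_trans)
  finally show ?thesis .
qed

lemma is_lsb_unique: "is_lsb u v i \<Longrightarrow> is_lsb u v i' \<Longrightarrow> i = i'"
  unfolding is_lsb_def by (metis atLeastLessThan_iff linorder_neqE_nat)

lemma ext_border_iff_int_border: "ext_border u v x y \<longleftrightarrow> int_border v u y x"
proof -
  have "abel_eq x y \<longleftrightarrow> abel_eq y x" unfolding abel_eq_def by auto
  moreover have "abel_eq x y \<Longrightarrow> x = [] \<longleftrightarrow> y = []" using abel_eq_length[of x y] by auto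
  ultimately show ?thesis unfolding ext_border_def int_border_def by blast
qed

definition lsb_pairs :: "nat \<Rightarrow> nat \<Rightarrow> nat \<Rightarrow> (word \<times> word) set" where
  "lsb_pairs n i j = {(u, v). length u = n \<and> length v = n \<and> is_lsb u v i \<and> is_lsb v u j}"

lemma finite_lsb_pairs: "finite (lsb_pairs n i j)"
  by (rule finite_subset[of _ "{x. length x = n} \<times> {y. length y = n}"])
     (auto simp: lsb_pairs_def finite_words_length)

lemma MAB_lsb_iff_is_lsb: "MAB u v \<and> lsb u v = i \<and> lsb v u = j \<longleftrightarrow> is_lsb u v i \<and> is_lsb v u j"
  using is_lsb_iff[of u v] is_lsb_iff[of v u] ext_border_iff_int_border[of u v]
  unfolding MAB_def by blast

lemma Mo_pairs_eq_Union_lsb_pairs: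
  "{(u, v). length u = n \<and> length v = n \<and> MAB u v \<and> int (lsb u v) + int (lsb v u) - int n = int g}
     = (\<Union>i\<in>{g + 1..n - 1}. lsb_pairs n i (n + g - i))"
proof (intro set_eqI iffI)
  fix z assume "z \<in> {(u, v). length u = n \<and> length v = n \<and> MAB u v \<and> int (lsb u v) + int (lsb v u) - int n = int g}"
  then obtain u v where z: "z = (u, v)" and len: "length u = n" "length v = n" and "MAB u v"
    and sum: "int (lsb u v) + int (lsb v u) - int n = int g" by blast
  then have lsb: "is_lsb u v (lsb u v)" "is_lsb v u (lsb v u)" using MAB_lsb_iff_is_lsb by blast+
  then have "lsb u v < n" "lsb v u < n" using len by (auto simp: is_lsb_def)
  then have "lsb u v \<in> {g + 1..n - 1}" "lsb v u = n + g - lsb u v" using sum by auto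
  then show "z \<in> (\<Union>i\<in>{g + 1..n - 1}. lsb_pairs n i (n + g - i))"
    using z len lsb unfolding lsb_pairs_def by force
next
  fix z assume "z \<in> (\<Union>i\<in>{g + 1..n - 1}. lsb_pairs n i (n + g - i))"
  then obtain i u v where i: "i \<in> {g + 1..n - 1}" and z: "z = (u, v)" and len: "length u = n" "length v = n"
    and "is_lsb u v i" "is_lsb v u (n + g - i)" unfolding lsb_pairs_def by blast
  then have "MAB u v" "lsb u v = i" "lsb v u = n + g - i" using MAB_lsb_iff_is_lsb by blast+
  then show "z \<in> {(u, v). length u = n \<and> length v = n \<and> MAB u v \<and> int (lsb u v) + int (lsb v u) - int n = int g}"
    using z len i by auto
qed

lemma Mo_eq_sum_card_lsb_pairs: "Mo g n = (\<Sum>i\<in>{g + 1..n - 1}. card (lsb_pairs n i (n + g - i)))"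
  unfolding Mo_def Mo_pairs_eq_Union_lsb_pairs
proof (rule card_UN_disjoint)
  show "\<forall>i\<in>{g + 1..n - 1}. \<forall>j\<in>{g + 1..n - 1}. i \<noteq> j \<longrightarrow> lsb_pairs n i (n + g - i) \<inter> lsb_pairs n j (n + g - j) = {}"
    unfolding lsb_pairs_def using is_lsb_unique by blast
qed (simp_all add: finite_lsb_pairs)

section \<open>Exchanging the letters\<close>

definition flip :: "word \<Rightarrow> word" where
  "flip = map (\<lambda>c. if c = La then Lb else La)"

lemma length_flip [simp]: "length (flip w) = length w"
  by (simp add: flip_def)

lemma flip_flip [simp]: "flip (flip w) = w"
  by (induction w) (auto simp: flip_def, metis letter.exhaust)

lemma inj_flip: "inj flip"
  by (metis flip_flip injI)

lemma acount_flip: "acount (flip w) = length w - acount w"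
proof (induction w)
  case (Cons a w)
  then show ?case using count_le_length[of w La] by (cases a) (auto simp: flip_def Suc_diff_le)
qed (simp add: flip_def)

lemma prefix_excess_flip:
  assumes "t \<le> length x" and "t \<le> length y"
  shows "prefix_excess (flip x) (flip y) t = - prefix_excess x y t"
proof -
  have "acount (take t (flip w)) = t - acount (take t w)" if "t \<le> length w" for w
    using that acount_flip[of "take t w"] by (simp add: flip_def take_map)
  then show ?thesis
    using assms count_le_length[of "take t x" La] count_le_length[of "take t y" La]
    by (simp add: prefix_excess_def of_nat_diff)
qed

lemma rev_flip: "rev (flip w) = flip (rev w)"
  by (simp add: flip_def rev_map)

lemma is_lsb_flip: "is_lsb (flip u) (flip v) i \<longleftrightarrow> is_lsb u v i"
proof -
  have "prefix_excess (rev (flip u)) (flip v) l = - prefix_excess (rev u) v l"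
    if "l < length u" "l < length v" for l
    using that by (simp add: rev_flip prefix_excess_flip)
  then show ?thesis
    unfolding is_lsb_def by (auto dest: order.strict_trans)
qed

text \<open>The pairs of \<open>lsb_pairs\<close> in which \<open>u\<close> starts with \<open>b\<close> and \<open>v\<close> ends with \<open>a\<close>.\<close>

definition lsb_pairs_ba :: "nat \<Rightarrow> nat \<Rightarrow> nat \<Rightarrow> (word \<times> word) set" where
  "lsb_pairs_ba n i j = {(u, v) \<in> lsb_pairs n i j. 0 < prefix_excess (rev v) u 1}"

lemma card_lsb_pairs:
  assumes "1 \<le> n" and "2 \<le> j"
  shows "card (lsb_pairs n i j) = 2 * card (lsb_pairs_ba n i j)"
proof -
  let ?F = "\<lambda>(u, v). (flip u, flip v)"
  have flip_mem: "(flip u, flip v) \<in> lsb_pairs n i j \<longleftrightarrow> (u, v) \<in> lsb_pairs n i j" for u v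
    by (simp add: lsb_pairs_def is_lsb_flip)
  have excess_flip: "prefix_excess (rev (flip v)) (flip u) 1 = - prefix_excess (rev v) u 1"
    if "(u, v) \<in> lsb_pairs n i j" for u v
    using that assms(1) by (simp add: lsb_pairs_def rev_flip prefix_excess_flip)
  have nonzero: "prefix_excess (rev v) u 1 \<noteq> 0" if "(u, v) \<in> lsb_pairs n i j" for u v
    using that assms(2) by (auto simp: lsb_pairs_def is_lsb_def)
  have split: "lsb_pairs n i j = lsb_pairs_ba n i j \<union> ?F ` lsb_pairs_ba n i j"
  proof (intro equalityI subsetI)
    fix z assume z: "z \<in> lsb_pairs n i j"
    obtain u v where uv: "z = (u, v)" by fastforce
    show "z \<in> lsb_pairs_ba n i j \<union> ?F ` lsb_pairs_ba n i j"
    proof (cases "0 < prefix_excess (rev v) u 1")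
      case True
      then show ?thesis using z uv by (simp add: lsb_pairs_ba_def)
    next
      case False
      then have "(flip u, flip v) \<in> lsb_pairs_ba n i j"
        using z uv nonzero[of u v] excess_flip[of u v] flip_mem[of u v] by (simp add: lsb_pairs_ba_def)
      then have "?F (flip u, flip v) \<in> ?F ` lsb_pairs_ba n i j" by (rule imageI)
      then show ?thesis using uv by simp
    qed
  next
    fix z assume "z \<in> lsb_pairs_ba n i j \<union> ?F ` lsb_pairs_ba n i j"
    then show "z \<in> lsb_pairs n i j" using flip_mem by (auto simp: lsb_pairs_ba_def)
  qed
  have disjoint: "lsb_pairs_ba n i j \<inter> ?F ` lsb_pairs_ba n i j = {}"
    using excess_flip unfolding lsb_pairs_ba_def by auto
  have "inj_on ?F (lsb_pairs_ba n i j)"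
    using inj_flip by (auto intro!: inj_onI dest: injD)
  moreover have "finite (lsb_pairs_ba n i j)"
    unfolding lsb_pairs_ba_def by (rule finite_subset[OF _ finite_lsb_pairs]) auto
  ultimately show ?thesis
    unfolding split using disjoint by (simp add: card_Un_disjoint card_image)
qed

section \<open>Gluing\<close>

text \<open>Gluing the blocks \<open>((x\<^sub>1, y\<^sub>1), (\<mu>, w), (x\<^sub>2, y\<^sub>2))\<close> into \<open>u = y\<^sub>1 \<mu> y\<^sub>2\<^sup>R\<close> and
  \<open>v = x\<^sub>2 w\<^sup>R x\<^sub>1\<^sup>R\<close>: then \<open>v\<^sup>R\<close> and \<open>u\<close> begin with \<open>x\<^sub>1 w\<close> and \<open>y\<^sub>1 \<mu>\<close>, while \<open>v\<close> and
  \<open>u\<^sup>R\<close> begin with \<open>x\<^sub>2 w\<^sup>R\<close> and \<open>y\<^sub>2 \<mu>\<^sup>R\<close>.\<close>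

definition glue :: "(word \<times> word) \<times> (word \<times> word) \<times> (word \<times> word) \<Rightarrow> word \<times> word" where
  "glue = (\<lambda>((x1, y1), (mu, w), (x2, y2)). (y1 @ mu @ rev y2, x2 @ rev w @ rev x1))"

lemma prefix_excess_glue:
  assumes "length x1 = length y1" and "length mu = length w" and "length x2 = length y2"
    and "(u, v) = glue ((x1, y1), (mu, w), (x2, y2))"
  shows "l \<le> length x1 + length w \<Longrightarrow> prefix_excess (rev v) u l = prefix_excess (x1 @ w) (y1 @ mu) l"
    and "l \<le> length x2 + length w \<Longrightarrow> prefix_excess v (rev u) l = prefix_excess (x2 @ rev w) (y2 @ rev mu) l"
proof -
  have "rev v = (x1 @ w) @ rev x2" "u = (y1 @ mu) @ rev y2" "rev u = (y2 @ rev mu) @ rev y1" "v = (x2 @ rev w) @ rev x1"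
    using assms(4) by (simp_all add: glue_def)
  then show "l \<le> length x1 + length w \<Longrightarrow> prefix_excess (rev v) u l = prefix_excess (x1 @ w) (y1 @ mu) l"
    and "l \<le> length x2 + length w \<Longrightarrow> prefix_excess v (rev u) l = prefix_excess (x2 @ rev w) (y2 @ rev mu) l"
    using prefix_excess_append[of "x1 @ w" "y1 @ mu" "rev x2" "rev y2" l]
      prefix_excess_append[of "x2 @ rev w" "y2 @ rev mu" "rev x1" "rev y1" l] assms(1-3)
    by (simp_all only:) simp_all
qed

lemma glue_in_lsb_pairs_ba_iff_excess:
  assumes len: "length x1 = N1" "length y1 = N1" "length mu = g" "length w = g" "length x2 = N2" "length y2 = N2"
    and pos: "1 \<le> N1" "1 \<le> N2" "1 \<le> g"
  defines "E \<equiv> prefix_excess (x1 @ w) (y1 @ mu)" and "F \<equiv> prefix_excess (x2 @ rev w) (y2 @ rev mu)"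
  shows "glue ((x1, y1), (mu, w), (x2, y2)) \<in> lsb_pairs_ba (N1 + g + N2) (N2 + g) (N1 + g) \<longleftrightarrow>
    (\<forall>l\<in>{1..<N1 + g}. 0 < E l) \<and> E (N1 + g) = 0 \<and> (\<forall>l\<in>{1..<N2 + g}. 0 < F l) \<and> F (N2 + g) = 0"
proof -
  obtain u v where uv: "(u, v) = glue ((x1, y1), (mu, w), (x2, y2))" by (metis surj_pair)
  then have lens: "length u = N1 + g + N2" "length v = N1 + g + N2"
    using len by (simp_all add: glue_def)
  have E: "prefix_excess (rev v) u l = E l" if "l \<le> N1 + g" for l
    using prefix_excess_glue(1)[OF _ _ _ uv] that len unfolding E_def by simp
  have F: "prefix_excess v (rev u) l = F l" if "l \<le> N2 + g" for l
    using prefix_excess_glue(2)[OF _ _ _ uv] that len unfolding F_def by simp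
  have ends: "F N2 = E N1" if "E (N1 + g) = 0" "F (N2 + g) = 0"
  proof -
    have "prefix_excess (rev w) (rev mu) g = prefix_excess w mu g"
      using prefix_excess_rev[of w mu g] len by (simp add: prefix_excess_def)
    moreover have "E (N1 + g) = prefix_excess x1 y1 N1 + prefix_excess w mu g" "E N1 = prefix_excess x1 y1 N1"
      "F (N2 + g) = prefix_excess x2 y2 N2 + prefix_excess (rev w) (rev mu) g" "F N2 = prefix_excess x2 y2 N2"
      using len pos(3) by (simp_all add: E_def F_def prefix_excess_append)
    ultimately show ?thesis using that by linarith
  qed
  have "(u, v) \<in> lsb_pairs_ba (N1 + g + N2) (N2 + g) (N1 + g) \<longleftrightarrow>
    (\<forall>l\<in>{1..<N1 + g}. 0 < E l) \<and> E (N1 + g) = 0 \<and> (\<forall>l\<in>{1..<N2 + g}. 0 < F l) \<and> F (N2 + g) = 0"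
  proof
    assume "(u, v) \<in> lsb_pairs_ba (N1 + g + N2) (N2 + g) (N1 + g)"
    then have "is_lsb v u (N1 + g)" "is_lsb u v (N2 + g)" "0 < prefix_excess (rev v) u 1"
      by (simp_all add: lsb_pairs_ba_def lsb_pairs_def)
    then have E_ne: "\<forall>l\<in>{1..<N1 + g}. E l \<noteq> 0" and E_0: "E (N1 + g) = 0" and E_1: "0 < E 1"
      and F_ne: "\<forall>l\<in>{1..<N2 + g}. F l \<noteq> 0" and F_0: "F (N2 + g) = 0"
      unfolding is_lsb_def using E F prefix_excess_swap[of "rev u" v] pos by auto
    have "\<forall>l\<in>{1..<N1 + g}. 0 < E l"
      using prefix_excess_pos_on[of 1 "N1 + g" "x1 @ w" "y1 @ mu" 1] E_ne E_1 pos unfolding E_def by simp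
    moreover have "\<forall>l\<in>{1..<N2 + g}. 0 < F l"
      using prefix_excess_pos_on[of 1 "N2 + g" "x2 @ rev w" "y2 @ rev mu" N2] F_ne ends[OF E_0 F_0] calculation pos
      unfolding E_def F_def by simp
    ultimately show "(\<forall>l\<in>{1..<N1 + g}. 0 < E l) \<and> E (N1 + g) = 0 \<and> (\<forall>l\<in>{1..<N2 + g}. 0 < F l) \<and> F (N2 + g) = 0"
      using E_0 F_0 by blast
  next
    assume "(\<forall>l\<in>{1..<N1 + g}. 0 < E l) \<and> E (N1 + g) = 0 \<and> (\<forall>l\<in>{1..<N2 + g}. 0 < F l) \<and> F (N2 + g) = 0"
    then have "is_lsb v u (N1 + g)" "is_lsb u v (N2 + g)" "0 < prefix_excess (rev v) u 1"
      unfolding is_lsb_def using E F prefix_excess_swap[of "rev u" v] pos lens by auto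
    then show "(u, v) \<in> lsb_pairs_ba (N1 + g + N2) (N2 + g) (N1 + g)"
      using lens by (simp add: lsb_pairs_ba_def lsb_pairs_def)
  qed
  then show ?thesis by (simp add: uv)
qed

lemma glue_in_lsb_pairs_ba_iff:
  assumes len: "length x1 = N1" "length y1 = N1" "length mu = g" "length w = g" "length x2 = N2" "length y2 = N2"
    and pos: "1 \<le> N1" "1 \<le> N2" "1 \<le> g"
  shows "glue ((x1, y1), (mu, w), (x2, y2)) \<in> lsb_pairs_ba (N1 + g + N2) (N2 + g) (N1 + g) \<longleftrightarrow>
    (\<exists>l1 l2 k c. (x1, y1) \<in> ballot_pairs N1 l1 l2 \<and> (mu, w) \<in> Nwords g l1 l2 k \<and>
       (x2, y2) \<in> ballot_pairs N2 c (c - (l1 - l2)))"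
proof -
  define l1 l2 k c where "l1 = int (acount x1)" and "l2 = int (acount y1)"
    and "k = l2 + int (acount mu)" and "c = int (acount x2)"
  have full: "prefix_excess x1 y1 N1 = l1 - l2" "prefix_excess x2 y2 N2 = c - int (acount y2)"
    using len prefix_excess_full[of x1 y1] prefix_excess_full[of x2 y2] by (simp_all add: l1_def l2_def c_def)
  have "glue ((x1, y1), (mu, w), (x2, y2)) \<in> lsb_pairs_ba (N1 + g + N2) (N2 + g) (N1 + g) \<longleftrightarrow>
    ((\<forall>l\<in>{1..<N1 + g}. 0 < prefix_excess (x1 @ w) (y1 @ mu) l) \<and>
      prefix_excess (x1 @ w) (y1 @ mu) (N1 + g) = 0) \<and>
    ((\<forall>l\<in>{1..<N2 + g}. 0 < prefix_excess (x2 @ rev w) (y2 @ rev mu) l) \<and>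
      prefix_excess (x2 @ rev w) (y2 @ rev mu) (N2 + g) = 0)"
    using glue_in_lsb_pairs_ba_iff_excess[OF len pos] by simp
  also have "\<dots> \<longleftrightarrow>
    ((\<forall>l\<in>{1..N1}. 0 < prefix_excess x1 y1 l) \<and> (\<forall>t\<in>{1..<g}. l2 - l1 < prefix_excess w mu t) \<and>
      prefix_excess w mu g = l2 - l1) \<and>
    ((\<forall>l\<in>{1..N2}. 0 < prefix_excess x2 y2 l) \<and> (\<forall>t\<in>{1..<g}. prefix_excess w mu t < 0) \<and>
      prefix_excess w mu g = int (acount y2) - c)"
    unfolding prefix_excess_append_first_zero_iff[OF len(1,2) pos(3)]
      prefix_excess_append_first_zero_iff[OF len(5,6) pos(3)] full
    using prefix_excess_rev_first_zero_iff[OF len(4,3), of "int (acount y2) - c"] by simp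
  also have "\<dots> \<longleftrightarrow> (x1, y1) \<in> ballot_pairs N1 l1 l2 \<and> (mu, w) \<in> Nwords g l1 l2 k \<and>
      (x2, y2) \<in> ballot_pairs N2 c (c - (l1 - l2))"
    unfolding ballot_pairs_iff Nwords_iff using len by (auto simp: l1_def l2_def k_def c_def)
  also have "\<dots> \<longleftrightarrow> (\<exists>l1 l2 k c. (x1, y1) \<in> ballot_pairs N1 l1 l2 \<and> (mu, w) \<in> Nwords g l1 l2 k \<and>
       (x2, y2) \<in> ballot_pairs N2 c (c - (l1 - l2)))"
    by (auto simp: ballot_pairs_def Nwords_def l1_def l2_def k_def c_def)
  finally show ?thesis .
qed

lemma glue_decomposition:
  assumes "length u = N1 + g + N2" and "length v = N1 + g + N2"
  obtains x1 y1 mu w x2 y2 where "(u, v) = glue ((x1, y1), (mu, w), (x2, y2))"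
    and "length x1 = N1" "length y1 = N1" "length mu = g" "length w = g" "length x2 = N2" "length y2 = N2"
proof
  show "(u, v) = glue ((rev (drop (N2 + g) v), take N1 u), (take g (drop N1 u), rev (take g (drop N2 v))),
      (take N2 v, rev (drop (N1 + g) u)))"
  proof -
    have "take g (drop N1 u) @ drop (N1 + g) u = drop N1 u" "take g (drop N2 v) @ drop (N2 + g) v = drop N2 v"
      by (metis append_take_drop_id drop_drop add.commute)+
    then show ?thesis unfolding glue_def by simp
  qed
qed (use assms in simp_all)

lemma glue_inj:
  assumes "glue ((x1, y1), (mu, w), (x2, y2)) = glue ((x1', y1'), (mu', w'), (x2', y2'))"
    and "length y1 = length y1'" "length mu = length mu'" "length x2 = length x2'" "length w = length w'"
  shows "((x1, y1), (mu, w), (x2, y2)) = ((x1', y1'), (mu', w'), (x2', y2'))"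
  using assms unfolding glue_def by auto

definition block_triples :: "nat \<Rightarrow> nat \<Rightarrow> nat \<Rightarrow> int \<Rightarrow> int \<Rightarrow> int \<Rightarrow> int \<Rightarrow>
    ((word \<times> word) \<times> (word \<times> word) \<times> (word \<times> word)) set" where
  "block_triples N1 g N2 l2 l1 k c = ballot_pairs N1 l1 l2 \<times> Nwords g l1 l2 k \<times> ballot_pairs N2 c (c - (l1 - l2))"

definition block_indices :: "nat \<Rightarrow> nat \<Rightarrow> nat \<Rightarrow> (int \<times> int \<times> int \<times> int) set" where
  "block_indices N1 g N2 = Sigma {0..int N1 - 2} (\<lambda>l2. Sigma {l2 + 2..int N1} (\<lambda>l1.
     Sigma {l1..int g + l2} (\<lambda>k. {l1 - l2..int N2})))"

lemma block_triples_lengths: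
  assumes "((x1, y1), (mu, w), (x2, y2)) \<in> block_triples N1 g N2 l2 l1 k c"
  shows "length x1 = N1" "length y1 = N1" "length mu = g" "length w = g" "length x2 = N2" "length y2 = N2"
  using assms by (auto simp: block_triples_def ballot_pairs_def Nwords_def)

lemma block_indices_if_block_triples:
  assumes "((x1, y1), (mu, w), (x2, y2)) \<in> block_triples N1 g N2 l2 l1 k c" and "2 \<le> g"
  shows "(l2, l1, k, c) \<in> block_indices N1 g N2"
proof -
  have x1: "int (acount x1) = l1" "length x1 = N1" and y1: "int (acount y1) = l2"
    and x2: "int (acount x2) = c" "length x2 = N2" and y2: "int (acount y2) = c - (l1 - l2)"
    and mu: "l2 + int (acount mu) = k" "length mu = g" and w: "l1 + int (acount w) = k"
    and first: "l2 + int (acount (take 1 mu)) < l1 + int (acount (take 1 w))"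
      "acount (take 1 w) < acount (take 1 mu)"
    using assms by (auto simp: block_triples_def ballot_pairs_def Nwords_def)
  have "l1 \<le> int N1" "c \<le> int N2" "k \<le> int g + l2"
    using x1 x2 mu count_le_length[of x1 La] count_le_length[of x2 La] count_le_length[of mu La] by auto
  then show ?thesis
    using first y1 y2 w unfolding block_indices_def by auto
qed

lemma lsb_pairs_ba_eq_glue_image:
  assumes "1 \<le> N1" and "1 \<le> N2" and "2 \<le> g"
  shows "lsb_pairs_ba (N1 + g + N2) (N2 + g) (N1 + g) =
    glue ` (\<Union>(l2, l1, k, c)\<in>block_indices N1 g N2. block_triples N1 g N2 l2 l1 k c)"
proof (intro set_eqI iffI)
  fix z assume z: "z \<in> lsb_pairs_ba (N1 + g + N2) (N2 + g) (N1 + g)"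
  obtain u v where uv: "z = (u, v)" by fastforce
  then have "length u = N1 + g + N2" "length v = N1 + g + N2"
    using z by (auto simp: lsb_pairs_ba_def lsb_pairs_def)
  then obtain x1 y1 mu w x2 y2 where glued: "z = glue ((x1, y1), (mu, w), (x2, y2))"
    and len: "length x1 = N1" "length y1 = N1" "length mu = g" "length w = g" "length x2 = N2" "length y2 = N2"
    using glue_decomposition uv by metis
  then obtain l1 l2 k c where "((x1, y1), (mu, w), (x2, y2)) \<in> block_triples N1 g N2 l2 l1 k c"
    using z glue_in_lsb_pairs_ba_iff[OF len] assms unfolding block_triples_def by auto
  then show "z \<in> glue ` (\<Union>(l2, l1, k, c)\<in>block_indices N1 g N2. block_triples N1 g N2 l2 l1 k c)"
    using glued block_indices_if_block_triples[OF _ assms(3)] by fastforce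
next
  fix z assume "z \<in> glue ` (\<Union>(l2, l1, k, c)\<in>block_indices N1 g N2. block_triples N1 g N2 l2 l1 k c)"
  then obtain x1 y1 mu w x2 y2 l2 l1 k c where glued: "z = glue ((x1, y1), (mu, w), (x2, y2))"
    and blocks: "((x1, y1), (mu, w), (x2, y2)) \<in> block_triples N1 g N2 l2 l1 k c" by auto
  then show "z \<in> lsb_pairs_ba (N1 + g + N2) (N2 + g) (N1 + g)"
    using glue_in_lsb_pairs_ba_iff[OF block_triples_lengths[OF blocks]] assms
    unfolding block_triples_def by auto
qed

lemma card_lsb_pairs_ba:
  assumes "1 \<le> N1" and "1 \<le> N2" and "2 \<le> g"
  shows "card (lsb_pairs_ba (N1 + g + N2) (N2 + g) (N1 + g)) = (\<Sum>(l2, l1, k, c)\<in>block_indices N1 g N2.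
    card (ballot_pairs N1 l1 l2) * card (Nwords g l1 l2 k) * card (ballot_pairs N2 c (c - (l1 - l2))))"
proof -
  let ?B = "\<lambda>(l2, l1, k, c). block_triples N1 g N2 l2 l1 k c"
  have "inj_on glue (\<Union>(?B ` block_indices N1 g N2))"
  proof (rule inj_onI)
    fix z z' assume z: "z \<in> \<Union>(?B ` block_indices N1 g N2)" and z': "z' \<in> \<Union>(?B ` block_indices N1 g N2)"
      and eq: "glue z = glue z'"
    obtain x1 y1 mu w x2 y2 where z_eq: "z = ((x1, y1), (mu, w), (x2, y2))" by (metis prod.collapse)
    obtain x1' y1' mu' w' x2' y2' where z'_eq: "z' = ((x1', y1'), (mu', w'), (x2', y2'))" by (metis prod.collapse)
    obtain l2 l1 k c where "((x1, y1), (mu, w), (x2, y2)) \<in> block_triples N1 g N2 l2 l1 k c"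
      using z unfolding z_eq by auto
    moreover obtain l2' l1' k' c' where "((x1', y1'), (mu', w'), (x2', y2')) \<in> block_triples N1 g N2 l2' l1' k' c'"
      using z' unfolding z'_eq by auto
    ultimately show "z = z'"
      using glue_inj[OF eq[unfolded z_eq z'_eq]] block_triples_lengths unfolding z_eq z'_eq by metis
  qed
  then have "card (lsb_pairs_ba (N1 + g + N2) (N2 + g) (N1 + g)) = card (\<Union>(?B ` block_indices N1 g N2))"
    unfolding lsb_pairs_ba_eq_glue_image[OF assms] by (simp add: card_image)
  also have "\<dots> = (\<Sum>i\<in>block_indices N1 g N2. card (?B i))"
  proof (rule card_UN_disjoint)
    show "finite (block_indices N1 g N2)"
      unfolding block_indices_def by (intro finite_SigmaI) auto
    show "\<forall>i\<in>block_indices N1 g N2. finite (?B i)"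
      by (auto simp: block_triples_def finite_ballot_pairs finite_Nwords)
    show "\<forall>i\<in>block_indices N1 g N2. \<forall>j\<in>block_indices N1 g N2. i \<noteq> j \<longrightarrow> ?B i \<inter> ?B j = {}"
      by (auto simp: block_triples_def ballot_pairs_def Nwords_def)
  qed
  finally show ?thesis
    by (simp add: block_triples_def card_cartesian_product split_def mult.assoc)
qed


lemma sum_shift_int: "(\<Sum>m\<in>{a + k..b + k}. f (m - k)) = (\<Sum>c\<in>{a..b}. f c)" for a b k :: int
  by (rule sum.reindex_bij_witness[of _ "\<lambda>c. c + k" "\<lambda>m. m - k"]) auto

lemma card_lsb_pairs_ba_formula:
  assumes "1 \<le> N1" and "1 \<le> N2" and "2 \<le> g"
  shows "real (card (lsb_pairs_ba (N1 + g + N2) (N2 + g) (N1 + g))) =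
    (\<Sum>l2\<in>{0..int N1 - 2}. \<Sum>l1\<in>{l2 + 2..int N1}. \<Sum>k\<in>{l1..int g + l2}. \<Sum>m\<in>{k + l1 - l2..int N2 + k}.
      (real_of_int (l1 - l2) / real_of_int (int N1)) * binom (int N1) l1 * binom (int N1) l2
      * real (Ncount (l2, int N1 - l2) (l1, int N1 - l1) (k, int N1 + int g - k))
      * (real_of_int (l1 - l2) / real_of_int (int N2)) * binom (int N2) (m - k) * binom (int N2) (m - (k + l1 - l2)))"
proof -
  have ballot: "real (card (ballot_pairs N c1 c2)) =
      real_of_int (c1 - c2) / real_of_int (int N) * binom (int N) c1 * binom (int N) c2"
    if "1 \<le> N" "c2 \<le> c1" for N c1 c2
    using card_ballot_pairs[OF that] that by (simp add: field_simps)
  have "real (card (lsb_pairs_ba (N1 + g + N2) (N2 + g) (N1 + g))) =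
    (\<Sum>l2\<in>{0..int N1 - 2}. \<Sum>l1\<in>{l2 + 2..int N1}. \<Sum>k\<in>{l1..int g + l2}. \<Sum>c\<in>{l1 - l2..int N2}.
      real (card (ballot_pairs N1 l1 l2)) * real (card (Nwords g l1 l2 k)) *
      real (card (ballot_pairs N2 c (c - (l1 - l2)))))"
    unfolding card_lsb_pairs_ba[OF assms] block_indices_def by (simp add: sum.Sigma split_def)
  also have "\<dots> = (\<Sum>l2\<in>{0..int N1 - 2}. \<Sum>l1\<in>{l2 + 2..int N1}. \<Sum>k\<in>{l1..int g + l2}. \<Sum>m\<in>{k + l1 - l2..int N2 + k}.
      (real_of_int (l1 - l2) / real_of_int (int N1)) * binom (int N1) l1 * binom (int N1) l2
      * real (Ncount (l2, int N1 - l2) (l1, int N1 - l1) (k, int N1 + int g - k))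
      * (real_of_int (l1 - l2) / real_of_int (int N2)) * binom (int N2) (m - k) * binom (int N2) (m - (k + l1 - l2)))"
  proof (rule sum.cong[OF refl], rule sum.cong[OF refl], rule sum.cong[OF refl])
    fix l2 l1 k assume "l1 \<in> {l2 + 2..int N1}"
    then have lt: "l2 < l1" by simp
    define G where "G c = real (card (ballot_pairs N1 l1 l2)) * real (card (Nwords g l1 l2 k)) *
      real (card (ballot_pairs N2 c (c - (l1 - l2))))" for c
    have "(\<Sum>c\<in>{l1 - l2..int N2}. G c) = (\<Sum>m\<in>{k + l1 - l2..int N2 + k}. G (m - k))"
      using sum_shift_int[where a = "l1 - l2" and k = k and b = "int N2" and f = G] by (simp add: algebra_simps)
    also have "\<dots> = (\<Sum>m\<in>{k + l1 - l2..int N2 + k}.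
      (real_of_int (l1 - l2) / real_of_int (int N1)) * binom (int N1) l1 * binom (int N1) l2
      * real (Ncount (l2, int N1 - l2) (l1, int N1 - l1) (k, int N1 + int g - k))
      * (real_of_int (l1 - l2) / real_of_int (int N2)) * binom (int N2) (m - k) * binom (int N2) (m - (k + l1 - l2)))"
    proof (rule sum.cong[OF refl])
      fix m
      have shift: "m - k - (l1 - l2) = m - (k + l1 - l2)" by simp
      show "G (m - k) = (real_of_int (l1 - l2) / real_of_int (int N1)) * binom (int N1) l1 * binom (int N1) l2
        * real (Ncount (l2, int N1 - l2) (l1, int N1 - l1) (k, int N1 + int g - k))
        * (real_of_int (l1 - l2) / real_of_int (int N2)) * binom (int N2) (m - k) * binom (int N2) (m - (k + l1 - l2))"
        unfolding G_def shift using assms lt by (simp add: ballot Ncount_eq_card_Nwords mult.assoc)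
    qed
    finally show "(\<Sum>c\<in>{l1 - l2..int N2}. G c) = \<dots>" .
  qed
  finally show ?thesis .
qed

theorem mainTheorem8:
  fixes n g :: nat
  assumes "n \<ge> 2" and "g \<ge> 3"
  shows "real (Mo g n) =
    2 * (\<Sum>i\<in>{int g + 1 .. int n - 1}.
          \<Sum>l2\<in>{0 .. int n - i - 2}.
          \<Sum>l1\<in>{l2 + 2 .. int n - i}.
          \<Sum>k\<in>{l1 .. int g + l2}.
          \<Sum>m\<in>{k + l1 - l2 .. int n - (int n + int g - i) + k}.
            let j = int n + int g - i; k' = k + l1 - l2 in
            (real_of_int (l1 - l2) / real_of_int (int n - i)) * binom (int n - i) l1 * binom (int n - i) l2
            * real (Ncount (l2, int n - i - l2) (l1, int n - i - l1) (k, j - k))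
            * (real_of_int (l1 - l2) / real_of_int (int n - j)) * binom (int n - j) (m - k) * binom (int n - j) (m - k'))"
    (is "_ = 2 * sum ?f _")
proof -
  have summand: "?f (int i) = real (card (lsb_pairs_ba n i (n + g - i)))" if "i \<in> {g + 1..n - 1}" for i
  proof -
    define N1 N2 where "N1 = n - i" and "N2 = i - g"
    have N: "1 \<le> N1" "1 \<le> N2" "2 \<le> g" using that assms unfolding N1_def N2_def by auto
    have "lsb_pairs_ba n i (n + g - i) = lsb_pairs_ba (N1 + g + N2) (N2 + g) (N1 + g)"
      using that assms unfolding N1_def N2_def by (simp add: le_diff_conv2)
    moreover have "int n - int i = int N1" "int n + int g - int i = int N1 + int g"
      "int n - (int N1 + int g) = int N2"
      using that assms unfolding N1_def N2_def by auto
    ultimately show ?thesis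
      unfolding Let_def by (simp only: card_lsb_pairs_ba_formula[OF N])
  qed
  have "real (Mo g n) = (\<Sum>i\<in>{g + 1..n - 1}. 2 * real (card (lsb_pairs_ba n i (n + g - i))))"
    unfolding Mo_eq_sum_card_lsb_pairs of_nat_sum using card_lsb_pairs assms by (intro sum.cong) auto
  also have "\<dots> = 2 * (\<Sum>i\<in>{g + 1..n - 1}. real (card (lsb_pairs_ba n i (n + g - i))))"
    by (simp add: sum_distrib_left)
  also have "(\<Sum>i\<in>{g + 1..n - 1}. real (card (lsb_pairs_ba n i (n + g - i)))) = (\<Sum>i\<in>{g + 1..n - 1}. ?f (int i))"
    by (rule sum.cong[OF refl]) (simp only: summand)
  also have "(\<Sum>i\<in>{g + 1..n - 1}. ?f (int i)) = sum ?f (int ` {g + 1..n - 1})"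
    by (simp add: sum.reindex)
  also have "int ` {g + 1..n - 1} = {int g + 1..int n - 1}"
    using assms by (simp add: image_int_atLeastAtMost of_nat_diff)
  finally show ?thesis .
qed

end
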